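(* Let $\lambda>0$ and $2<q<3$. Let $f_1(c_0)=c_0^{q-2}/M_2(\lambda,c_0)$, $f_2(c_0)=c_0^{q-3}/M_3(\lambda,c_0)$ and $\xi(c_0)=\max\{f_1(c_0),f_2(c_0)\}$ for $c_0>0$. Then $f_1$ is nondecreasing, $f_2$ is nonincreasing, and $$\inf_{c_0>0}\xi(c_0)=M_2(\lambda,c^* )^{q-3}M_3(\lambda,c^* )^{2-q},$$ where $c^*$ is the unique fixed point of the function $c_0\mapsto M_2(\lambda,c_0)/M_3(\lambda,c_0)$.
   Context: For $A\in\mathbb{R}^{3\times3}$ let $\lambda_1(A),\lambda_2(A),\lambda_3(A)$ be its singular values, $P(A)=\sum_{1\le i<j\le3}\lambda_i(A)\lambda_j(A)-\lambda\sum_i\lambda_i(A)$, $N(A)=\operatorname{tr}\operatorname{cof}A-\lambda\operatorname{tr}A$ (cof the cofactor matrix), and $G(A)=P(A)-N(A)$. $|\cdot|$ is the Frobenius norm and $\mathbf{1}$ the identity. For $c_0>0$: $M_2(\lambda,c_0)=\sup\{|G(A)|/|A-\lambda\mathbf{1}|^2:\ |A-\lambda\mathbf{1}|\ge c_0\}$ and $M_3(\lambda,c_0)=\sup\{|G(A)|/|A-\lambda\mathbf{1}|^3:\ 0<|A-\lambda\mathbf{1}|<c_0\}$. *)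

theory Defs
  imports "HOL-Analysis.Analysis"
begin

type_synonym mat3 = "real^3^3"

text \<open>Cofactor matrix: entry (i,j) is (-1)^(i+j) times the (i,j) minor, written
  (as in HOL Light) as the determinant of A with row i and column j replaced by unit vectors.\<close>
definition cof :: "mat3 \<Rightarrow> mat3" where
  "cof A = (\<chi> i j. det (\<chi> k l. if k = i \<and> l = j then 1
                               else if k = i \<or> l = j then 0 else A$k$l))"

text \<open>Singular values: nonnegative square roots of the eigenvalues of A^T A,
  counted with multiplicity (i.e. the characteristic polynomial of A^T A factors
  as the product of (x - s_i^2)).\<close>
definition is_sing_vals :: "mat3 \<Rightarrow> real^3 \<Rightarrow> bool" where
  "is_sing_vals A s \<longleftrightarrow> (\<forall>i. s$i \<ge> 0) \<and>
     (\<forall>x::real. det (x *\<^sub>R mat 1 - transpose A ** A) = (\<Prod>i\<in>UNIV. x - (s$i)^2))"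

definition sing_vals :: "mat3 \<Rightarrow> real^3" where
  "sing_vals A = (SOME s. is_sing_vals A s)"

definition Pfun :: "real \<Rightarrow> mat3 \<Rightarrow> real" where
  "Pfun lam A = (let s = sing_vals A in
     (s$1 * s$2 + s$1 * s$3 + s$2 * s$3) - lam * (s$1 + s$2 + s$3))"

definition Nfun :: "real \<Rightarrow> mat3 \<Rightarrow> real" where
  "Nfun lam A = trace (cof A) - lam * trace A"

definition Gfun :: "real \<Rightarrow> mat3 \<Rightarrow> real" where
  "Gfun lam A = Pfun lam A - Nfun lam A"

text \<open>Frobenius norm = the Euclidean norm on real^3^3 (library norm).\<close>
definition M2 :: "real \<Rightarrow> real \<Rightarrow> real" where
  "M2 lam c0 = (SUP A\<in>{A::mat3. norm (A - lam *\<^sub>R mat 1) \<ge> c0}.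
                  \<bar>Gfun lam A\<bar> / norm (A - lam *\<^sub>R mat 1) ^ 2)"

definition M3 :: "real \<Rightarrow> real \<Rightarrow> real" where
  "M3 lam c0 = (SUP A\<in>{A::mat3. 0 < norm (A - lam *\<^sub>R mat 1) \<and> norm (A - lam *\<^sub>R mat 1) < c0}.
                  \<bar>Gfun lam A\<bar> / norm (A - lam *\<^sub>R mat 1) ^ 3)"

end

theory Submission
  imports Defs
begin

text \<open>The sets over which \<open>M2 lam c\<close> and \<open>M3 lam c\<close> take their suprema shrink, respectively
  grow, with \<open>c\<close>; so \<open>M2\<close> decreases, \<open>M3\<close> increases, and the monotonicity of \<open>f1\<close>, \<open>f2\<close>
  follows.  Both suprema are finite and positive: \<open>G\<close> grows at most quadratically, it vanishes to
  third order at \<open>lam\<close> times the identity (the first two elementary symmetric functions of the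
  singular values agree with \<open>trace A\<close> and \<open>trace (cof A)\<close> up to the squared skew parts of
  \<open>A\<close> and \<open>cof A\<close>, which cancel to second order), and it is positive on an explicit sheared
  matrix.  Continuity of the singular values makes \<open>G\<close>, and with it \<open>M2\<close> and \<open>M3\<close>,
  continuous.  Hence \<open>M2/M3\<close> is a continuous decreasing positive function with a unique fixed
  point \<open>c\<close>, where \<open>f1 c = f2 c\<close>, and the increasing \<open>f1\<close> and decreasing \<open>f2\<close> make
  \<open>max f1 f2\<close> minimal there.\<close>

section \<open>Real analysis\<close>

lemma uniformly_continuous_on_intervalI:
  fixes f :: "real \<Rightarrow> real"
  assumes "\<And>e. 0 < e \<Longrightarrow> \<exists>d>0. \<forall>x y. a \<le> x \<longrightarrow> x \<le> y \<longrightarrow> y \<le> b \<longrightarrow> y - x < d \<longrightarrow> \<bar>f y - f x\<bar> < e"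
  shows "uniformly_continuous_on {a..b} f"
  unfolding uniformly_continuous_on_def dist_real_def
proof (intro allI impI)
  fix e :: real assume "0 < e"
  then obtain d where d: "0 < d"
    and close: "\<And>x y. a \<le> x \<Longrightarrow> x \<le> y \<Longrightarrow> y \<le> b \<Longrightarrow> y - x < d \<Longrightarrow> \<bar>f y - f x\<bar> < e"
    using assms by blast
  have "\<bar>f x' - f x\<bar> < e" if "x \<in> {a..b}" "x' \<in> {a..b}" "\<bar>x' - x\<bar> < d" for x x'
    using that close[of x x'] close[of x' x] by (cases "x \<le> x'") (auto simp: abs_minus_commute)
  with d show "\<exists>d>0. \<forall>x\<in>{a..b}. \<forall>x'\<in>{a..b}. \<bar>x' - x\<bar> < d \<longrightarrow> \<bar>f x' - f x\<bar> < e" by blast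
qed

lemma isCont_if_uniformly_continuous_around:
  fixes f :: "real \<Rightarrow> real"
  assumes "0 < c" "uniformly_continuous_on {c/2..2*c} f"
  shows "isCont f c"
  using continuous_on_interior[OF uniformly_continuous_imp_continuous[OF assms(2)]] assms(1)
  by simp

lemma unique_fixed_point_antimono:
  fixes g :: "real \<Rightarrow> real"
  assumes cont: "\<And>c. 0 < c \<Longrightarrow> isCont g c" and pos: "\<And>c. 0 < c \<Longrightarrow> 0 < g c"
    and anti: "\<And>c c'. 0 < c \<Longrightarrow> c \<le> c' \<Longrightarrow> g c' \<le> g c"
  shows "\<exists>!c. 0 < c \<and> g c = c"
proof -
  define a b where "a = min 1 (g 1 / 2)" and "b = max 1 (g 1 + 1)"
  have a: "0 < a" "a \<le> 1" "a < g 1" using pos[of 1] by (auto simp: a_def)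
  have b: "1 \<le> b" "g 1 < b" by (auto simp: b_def)
  have "a \<le> g a" using anti[OF a(1,2)] a by simp
  moreover have "g b \<le> b" using anti[of 1 b] b by simp
  moreover have "continuous_on {a..b} (\<lambda>c. g c - c)"
    using a by (intro continuous_at_imp_continuous_on ballI continuous_intros cont) auto
  ultimately obtain c where "a \<le> c" "c \<le> b" "g c - c = 0"
    using IVT2'[of "\<lambda>c. g c - c" b 0 a] a b by auto
  then have "0 < c \<and> g c = c" using a by simp
  moreover have "c1 = c2" if "0 < c1" "g c1 = c1" "0 < c2" "g c2 = c2" for c1 c2
    using anti[of c1 c2] anti[of c2 c1] that by (cases "c1 \<le> c2") auto
  ultimately show ?thesis by blast
qed

lemma INF_max_mono_antimono:
  fixes f g :: "'a::linorder \<Rightarrow> 'b::conditionally_complete_linorder"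
  assumes f: "mono_on S f" and g: "antimono_on S g" and c: "c \<in> S" "f c = g c"
  shows "(INF x\<in>S. max (f x) (g x)) = f c"
proof (rule cInf_eq_minimum)
  show "f c \<in> (\<lambda>x. max (f x) (g x)) ` S" using c by force
next
  fix y assume "y \<in> (\<lambda>x. max (f x) (g x)) ` S"
  then obtain x where x: "x \<in> S" "y = max (f x) (g x)" by auto
  show "f c \<le> y"
  proof (cases "c \<le> x")
    case True
    then show ?thesis using mono_onD[OF f c(1) x(1)] x by (simp add: le_max_iff_disj)
  next
    case False
    then show ?thesis using monotone_onD[OF g x(1) c(1)] x c by (simp add: le_max_iff_disj)
  qed
qed

lemma mono_on_powr_div:
  fixes g :: "real \<Rightarrow> real"
  assumes "0 \<le> p" and pos: "\<And>x. 0 < x \<Longrightarrow> 0 < g x"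
    and anti: "\<And>x y. 0 < x \<Longrightarrow> x \<le> y \<Longrightarrow> g y \<le> g x"
  shows "mono_on {0<..} (\<lambda>x. x powr p / g x)"
proof (rule mono_onI)
  fix x y :: real assume "x \<in> {0<..}" "y \<in> {0<..}" "x \<le> y"
  then show "x powr p / g x \<le> y powr p / g y"
    using assms by (intro frac_le powr_mono2) auto
qed

lemma antimono_on_powr_div:
  fixes g :: "real \<Rightarrow> real"
  assumes "p \<le> 0" and pos: "\<And>x. 0 < x \<Longrightarrow> 0 < g x"
    and mono: "\<And>x y. 0 < x \<Longrightarrow> x \<le> y \<Longrightarrow> g x \<le> g y"
  shows "antimono_on {0<..} (\<lambda>x. x powr p / g x)"
proof (rule monotone_onI)
  fix x y :: real assume "x \<in> {0<..}" "y \<in> {0<..}" "x \<le> y"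
  then show "y powr p / g y \<le> x powr p / g x"
    using assms by (intro frac_le powr_mono2') auto
qed

lemma powr_ratio_identities:
  fixes x y q :: real
  assumes x: "0 < x" and y: "0 < y"
  shows "(x/y) powr (q-2) / x = x powr (q-3) * y powr (2-q)"
    and "(x/y) powr (q-3) / y = x powr (q-3) * y powr (2-q)"
proof -
  have x1: "x powr (q-2) = x powr (q-3) * x" and y1: "y powr (q-2) = y powr (q-3) * y"
    using powr_add[of x "q-3" 1] powr_add[of y "q-3" 1] x y by simp_all
  have y2: "y powr (2-q) = 1 / y powr (q-2)" using y by (simp add: powr_minus_divide[symmetric])
  show "(x/y) powr (q-2) / x = x powr (q-3) * y powr (2-q)"
    using x y by (simp add: powr_divide x1 y2 field_simps)
  show "(x/y) powr (q-3) / y = x powr (q-3) * y powr (2-q)"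
    using x y by (simp add: powr_divide y1 y2 field_simps)
qed

section \<open>Invariants of 3 by 3 matrices\<close>

lemma prod_UNIV_3: "prod f (UNIV::3 set) = f 1 * f 2 * f 3"
  unfolding UNIV_3 by (simp add: ac_simps)

lemma trace_mat3: "trace (A::mat3) = A$1$1 + A$2$2 + A$3$3"
  by (simp add: trace_def sum_3)

lemma norm_mat3_sq:
  "norm (A::mat3)^2 = (A$1$1)^2 + (A$1$2)^2 + (A$1$3)^2 + (A$2$1)^2 + (A$2$2)^2 + (A$2$3)^2
     + (A$3$1)^2 + (A$3$2)^2 + (A$3$3)^2"
  by (simp add: norm_vec_def L2_set_def sum_3 real_norm_def add.assoc)

lemma cof_mat3:
  "cof A $1$1 = A$2$2*A$3$3 - A$2$3*A$3$2"
  "cof A $1$2 = A$2$3*A$3$1 - A$2$1*A$3$3"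
  "cof A $1$3 = A$2$1*A$3$2 - A$2$2*A$3$1"
  "cof A $2$1 = A$1$3*A$3$2 - A$1$2*A$3$3"
  "cof A $2$2 = A$1$1*A$3$3 - A$1$3*A$3$1"
  "cof A $2$3 = A$1$2*A$3$1 - A$1$1*A$3$2"
  "cof A $3$1 = A$1$2*A$2$3 - A$1$3*A$2$2"
  "cof A $3$2 = A$1$3*A$2$1 - A$1$1*A$2$3"
  "cof A $3$3 = A$1$1*A$2$2 - A$1$2*A$2$1"
  unfolding cof_def det_3 by (simp_all add: algebra_simps)

lemma cof_scaleR: "cof (c *\<^sub>R A) = c^2 *\<^sub>R cof A"
  by (simp add: vec_eq_iff forall_3 cof_mat3 power2_eq_square algebra_simps)

lemma cof_cof_mat3: "cof (cof A) = det A *\<^sub>R A"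
  by (simp add: vec_eq_iff forall_3 cof_mat3 det_3) algebra

lemma cof_id_plus:
  "cof (mat 1 + H) = (1 + trace H) *\<^sub>R mat 1 - transpose H + cof H"
  by (simp add: vec_eq_iff forall_3 cof_mat3 trace_mat3 transpose_def mat_def algebra_simps)

lemma det_id_plus: "det (mat 1 + H :: mat3) = 1 + trace H + trace (cof H) + det H"
  by (simp add: det_3 trace_mat3 cof_mat3 mat_def algebra_simps)

lemma trace_scaleR: "trace (c *\<^sub>R (A::mat3)) = c * trace A"
  by (simp add: trace_mat3 algebra_simps)

lemma det_scaleR_mat3: "det (c *\<^sub>R (A::mat3)) = c^3 * det A"
  by (simp add: det_3 power3_eq_cube algebra_simps)

lemma trace_eq_inner_mat1: "trace (A::mat3) = inner A (mat 1)"
  by (simp add: trace_mat3 inner_vec_def sum_3 mat_def)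

lemma norm_mat1_mat3: "norm (mat 1 :: mat3) = sqrt 3"
  by (simp add: norm_eq_sqrt_inner inner_vec_def sum_3 mat_def)

lemma abs_trace_le: "\<bar>trace (A::mat3)\<bar> \<le> 2 * norm A"
proof -
  have "\<bar>trace A\<bar> \<le> norm A * sqrt 3"
    using Cauchy_Schwarz_ineq2[of A "mat 1"] by (simp add: trace_eq_inner_mat1 norm_mat1_mat3)
  also have "\<dots> \<le> norm A * 2"
    by (intro mult_left_mono) (auto simp: real_sqrt_le_iff[of 3 4, simplified])
  finally show ?thesis by simp
qed

lemma norm_transpose_mat3: "norm (transpose A :: mat3) = norm A"
proof -
  have "norm (transpose A)^2 = norm A^2" by (simp add: norm_mat3_sq transpose_def)
  then show ?thesis by (simp add: power2_eq_iff_nonneg)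
qed

definition skew_part :: "mat3 \<Rightarrow> mat3" where
  "skew_part A = (1/2) *\<^sub>R (A - transpose A)"

lemma norm_skew_part_le: "norm (skew_part A) \<le> norm A"
proof -
  have "norm (A - transpose A) \<le> 2 * norm A"
    using norm_triangle_ineq4[of A "transpose A"] by (simp add: norm_transpose_mat3)
  then show ?thesis by (simp add: skew_part_def)
qed

lemma norm_sq_eq_trace_cof:
  "norm A^2 = trace A^2 - 2 * trace (cof A) + 2 * norm (skew_part A)^2"
  unfolding norm_mat3_sq skew_part_def norm_scaleR power_mult_distrib
  by (simp add: trace_mat3 cof_mat3 transpose_def power2_eq_square) algebra


section \<open>Singular values\<close>

lemma charpoly_transpose_mult:
  "det (x *\<^sub>R mat 1 - transpose A ** (A::mat3)) = x^3 - norm A^2 * x^2 + norm (cof A)^2 * x - det A^2"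
  unfolding det_3 norm_mat3_sq cof_mat3
  by (simp add: matrix_matrix_mult_def sum_3 transpose_def mat_def) algebra

lemma is_sing_vals_iff:
  "is_sing_vals A s \<longleftrightarrow> (\<forall>i. 0 \<le> s$i) \<and>
     (\<forall>x. x^3 - norm A^2 * x^2 + norm (cof A)^2 * x - det A^2
            = (x - (s$1)^2) * (x - (s$2)^2) * (x - (s$3)^2))"
  unfolding is_sing_vals_def charpoly_transpose_mult prod_UNIV_3 by simp

lemma charpoly_transpose_mult_neg:
  fixes A :: mat3
  assumes "r < 0"
  shows "r^3 - norm A^2 * r^2 + norm (cof A)^2 * r - det A^2 < 0"
proof -
  have "r^3 < 0" using assms by (simp add: power_less_zero_eq)
  moreover have "norm (cof A)^2 * r \<le> 0" using assms by (simp add: mult_nonneg_nonpos)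
  moreover have "0 \<le> norm A^2 * r^2" "0 \<le> det A^2" by simp_all
  ultimately show ?thesis by linarith
qed

lemma charpoly_transpose_mult_root: "\<exists>mu. det (mu *\<^sub>R mat 1 - transpose A ** (A::mat3)) = 0"
proof -
  define p where "p x = x^3 - norm A^2 * x^2 + norm (cof A)^2 * x - det A^2" for x
  define X where "X = 1 + norm A^2 + det A^2"
  have X: "1 \<le> X" "norm A^2 + 1 \<le> X" "det A^2 < X"
    unfolding X_def using zero_le_power2[of "norm A"] zero_le_power2[of "det A"] by linarith+
  have "X^2 \<le> X^3 - norm A^2 * X^2"
  proof -
    have "X^2 * 1 \<le> X^2 * (X - norm A^2)" using X by (intro mult_left_mono) auto
    then show ?thesis by (simp add: algebra_simps power2_eq_square power3_eq_cube)
  qed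
  moreover have "X \<le> X^2" using X by (simp add: power2_eq_square)
  moreover have "0 \<le> norm (cof A)^2 * X" using X by simp
  ultimately have "0 < p X" using X unfolding p_def by linarith
  moreover have "p 0 \<le> 0" unfolding p_def by simp
  moreover have "continuous_on {0..X} p" unfolding p_def by (intro continuous_intros)
  ultimately obtain mu where "p mu = 0"
    using IVT'[of p 0 0 X] X by auto
  then show ?thesis by (auto simp: charpoly_transpose_mult p_def)
qed

lemma det_eq_0_obtain_kernel:
  fixes M :: "real^'n^'n"
  assumes "det M = 0"
  obtains v where "v \<noteq> 0" "M *v v = 0"
proof -
  have "\<not> inj ((*v) M)"
    using det_nz_iff_inj[of "(*v) M"] assms by simp
  then show ?thesis
    using linear_injective_0[of "(*v) M"] that by auto
qed

lemma matrix_diff_ldistrib: "(A::'a::ring_1^'n^'m) ** (B - C) = A ** B - A ** C"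
  by (simp add: matrix_matrix_mult_def vec_eq_iff sum_subtractf right_diff_distrib)

lemma matrix_diff_rdistrib: "((A::'a::ring_1^'n^'m) - B) ** C = A ** C - B ** C"
  by (simp add: matrix_matrix_mult_def vec_eq_iff sum_subtractf left_diff_distrib)

lemma charpoly_orthogonal_conj:
  fixes P B :: "real^'n^'n"
  assumes "orthogonal_matrix P"
  shows "det (x *\<^sub>R mat 1 - transpose P ** B ** P) = det (x *\<^sub>R mat 1 - B)"
proof -
  have PP: "transpose P ** P = mat 1" using assms by (simp add: orthogonal_matrix)
  have "x *\<^sub>R mat 1 - transpose P ** B ** P = transpose P ** (x *\<^sub>R mat 1 - B) ** P"
    by (simp add: matrix_diff_ldistrib matrix_diff_rdistrib matrix_scalar_ac
        scalar_matrix_assoc[symmetric] PP)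
  then show ?thesis
    using PP by (simp add: det_mul) (metis det_I det_mul det_transpose mult.commute)
qed

lemma charpoly_block_mat3:
  fixes C :: mat3
  assumes "C$1$3 = 0" "C$2$3 = 0" "C$3$3 = mu" "C$3$1 = 0" "C$3$2 = 0" "C$2$1 = C$1$2"
  shows "det (x *\<^sub>R mat 1 - C) = (x - mu) * ((x - C$1$1) * (x - C$2$2) - (C$1$2)^2)"
  unfolding det_3 using assms by (simp add: mat_def power2_eq_square algebra_simps)

lemma orthogonal_conj_eigenvector:
  fixes B :: "real^'n^'n"
  assumes "det (mu *\<^sub>R mat 1 - B) = 0"
  obtains P where "orthogonal_matrix P" "(transpose P ** B ** P) *v axis k 1 = mu *\<^sub>R axis k 1"
proof -
  obtain v where v: "v \<noteq> 0" "(mu *\<^sub>R mat 1 - B) *v v = 0"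
    using det_eq_0_obtain_kernel[OF assms] by blast
  define w where "w = v /\<^sub>R norm v"
  have "norm w = 1" using v(1) by (simp add: w_def)
  then obtain P where P: "orthogonal_matrix P" "P *v axis k 1 = w"
    using orthogonal_matrix_exists_basis by blast
  have "B *v v = mu *\<^sub>R v" using v(2)
    by (simp add: matrix_vector_mult_diff_rdistrib scaleR_matrix_vector_assoc[symmetric])
  then have Bw: "B *v w = mu *\<^sub>R w"
    by (simp add: w_def matrix_vector_mult_scaleR scaleR_scaleR mult.commute)
  have "transpose P *v w = axis k 1"
    using P by (metis matrix_vector_mul_assoc matrix_vector_mul_lid orthogonal_matrix)
  then have "(transpose P ** B ** P) *v axis k 1 = mu *\<^sub>R axis k 1"
    using P(2) Bw by (simp add: matrix_vector_mul_assoc[symmetric] matrix_vector_mult_scaleR)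
  with P(1) show thesis by (rule that)
qed

text \<open>After rotating an eigenvector to the last basis vector, the remaining 2 by 2 symmetric
  block has real eigenvalues since its discriminant is a sum of squares.\<close>
lemma symmetric_charpoly_splits:
  fixes B :: mat3
  assumes sym: "transpose B = B" and root: "det (mu *\<^sub>R mat 1 - B) = 0"
  obtains r2 r3 where "\<And>x. det (x *\<^sub>R mat 1 - B) = (x - mu) * (x - r2) * (x - r3)"
proof -
  obtain P where P: "orthogonal_matrix P" "(transpose P ** B ** P) *v axis 3 1 = mu *\<^sub>R axis 3 1"
    using orthogonal_conj_eigenvector[OF root] by blast
  define C where "C = transpose P ** B ** P"
  have C3: "C$1$3 = 0" "C$2$3 = 0" "C$3$3 = mu"
    using P(2) by (auto simp: C_def vec_eq_iff forall_3 matrix_vector_mult_def sum_3 axis_def)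
  have Csym: "transpose C = C"
    unfolding C_def by (metis sym matrix_transpose_mul matrix_mul_assoc transpose_transpose)
  have Cij: "C$i$j = C$j$i" for i j
  proof -
    have "C$i$j = transpose C $j$i" by (simp add: transpose_def)
    then show ?thesis using Csym by simp
  qed
  have C3': "C$3$1 = 0" "C$3$2 = 0" "C$2$1 = C$1$2"
    using Cij[of 3 1] Cij[of 3 2] Cij[of 2 1] C3 by simp_all
  define a b c where "a = C$1$1" and "b = C$1$2" and "c = C$2$2"
  define D where "D = sqrt ((a - c)^2 + 4*b^2)"
  have DD: "D^2 = (a - c)^2 + 4*b^2" unfolding D_def by simp
  have "det (x *\<^sub>R mat 1 - B) = (x - mu) * (x - (a + c + D)/2) * (x - (a + c - D)/2)" for x
  proof -
    have "det (x *\<^sub>R mat 1 - B) = det (x *\<^sub>R mat 1 - C)"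
      unfolding C_def by (rule charpoly_orthogonal_conj[OF P(1), symmetric])
    also have "\<dots> = (x - mu) * ((x - a) * (x - c) - b^2)"
      unfolding a_def b_def c_def by (rule charpoly_block_mat3[OF C3 C3'])
    also have "(x - a) * (x - c) - b^2 = (x - (a + c + D)/2) * (x - (a + c - D)/2)"
      using DD by (simp add: field_simps power2_eq_square; algebra)
    finally show ?thesis by (simp add: mult.assoc)
  qed
  then show thesis by (rule that)
qed

lemma sing_vals_exist: "\<exists>s. is_sing_vals A s"
proof -
  obtain mu where mu: "det (mu *\<^sub>R mat 1 - transpose A ** A) = 0"
    using charpoly_transpose_mult_root by blast
  have "transpose (transpose A ** A) = transpose A ** A" by (simp add: matrix_transpose_mul)
  then obtain r2 r3 where r:
    "\<And>x. det (x *\<^sub>R mat 1 - transpose A ** A) = (x - mu) * (x - r2) * (x - r3)"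
    using symmetric_charpoly_splits mu by blast
  have nonneg: "0 \<le> r" if "det (r *\<^sub>R mat 1 - transpose A ** A) = 0" for r
    using charpoly_transpose_mult_neg[of r A] that by (force simp: charpoly_transpose_mult)
  have "0 \<le> mu" "0 \<le> r2" "0 \<le> r3" using nonneg r by auto
  then have "is_sing_vals A (vector [sqrt mu, sqrt r2, sqrt r3])"
    by (auto simp: is_sing_vals_def prod_UNIV_3 r forall_3)
  then show ?thesis by blast
qed

lemma sing_vals_valid: "is_sing_vals A (sing_vals A)"
  unfolding sing_vals_def using sing_vals_exist by (rule someI_ex)

lemma cubic_coeffs_eq:
  fixes p q r p' q' r' :: real
  assumes "\<And>x. x^3 + p*x^2 + q*x + r = x^3 + p'*x^2 + q'*x + r'"
  shows "p = p'" "q = q'" "r = r'"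
proof -
  show r: "r = r'" using assms[of 0] by simp
  have "p + q = p' + q'" "p - q = p' - q'" using assms[of 1] assms[of "-1"] r by simp_all
  then show "p = p'" "q = q'" by linarith+
qed

lemma cubic_cancel_root:
  fixes a b c b' c' :: real
  assumes "\<And>x. (x-a)*(x-b)*(x-c) = (x-a)*(x-b')*(x-c')"
  shows "(b' = b \<and> c' = c) \<or> (b' = c \<and> c' = b)"
proof -
  have "x^3 + (-(a+b+c))*x^2 + (a*b+a*c+b*c)*x + (-(a*b*c)) =
        x^3 + (-(a+b'+c'))*x^2 + (a*b'+a*c'+b'*c')*x + (-(a*b'*c'))" for x
    using assms[of x] by (simp add: algebra_simps power2_eq_square power3_eq_cube)
  note coeffs = cubic_coeffs_eq[OF this]
  have sum: "b' + c' = b + c" using coeffs(1) by simp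
  have "a * (b' + c') + b' * c' = a * (b + c) + b * c" using coeffs(2) by (simp add: algebra_simps)
  then have "b' * c' = b * c" using sum by simp
  then have "(b' - b) * (b' - c) = 0" using sum by algebra
  then show ?thesis using sum by auto
qed

lemma cubic_roots_perm:
  fixes a b c a' b' c' :: real
  assumes H: "\<And>x. (x-a)*(x-b)*(x-c) = (x-a')*(x-b')*(x-c')"
  shows "(a' = a \<and> ((b' = b \<and> c' = c) \<or> (b' = c \<and> c' = b))) \<or>
         (a' = b \<and> ((b' = a \<and> c' = c) \<or> (b' = c \<and> c' = a))) \<or>
         (a' = c \<and> ((b' = a \<and> c' = b) \<or> (b' = b \<and> c' = a)))"
proof -
  have "(a'-a)*(a'-b)*(a'-c) = 0" using H[of a'] by simp
  then consider "a' = a" | "a' = b" | "a' = c" by auto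
  then show ?thesis
  proof cases
    case 1
    then show ?thesis using cubic_cancel_root[of a b c b' c'] H by auto
  next
    case 2
    have "(x-b)*(x-a)*(x-c) = (x-b)*(x-b')*(x-c')" for x
      using H[of x] 2 by (simp add: ac_simps)
    then show ?thesis using cubic_cancel_root[of b a c b' c'] 2 by auto
  next
    case 3
    have "(x-c)*(x-a)*(x-b) = (x-c)*(x-b')*(x-c')" for x
      using H[of x] 3 by (simp add: ac_simps)
    then show ?thesis using cubic_cancel_root[of c a b b' c'] 3 by auto
  qed
qed

definition esym1 :: "real^3 \<Rightarrow> real" where "esym1 s = s$1 + s$2 + s$3"
definition esym2 :: "real^3 \<Rightarrow> real" where "esym2 s = s$1 * s$2 + s$1 * s$3 + s$2 * s$3"
definition esym3 :: "real^3 \<Rightarrow> real" where "esym3 s = s$1 * s$2 * s$3"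

lemma sing_vals_esym_unique:
  assumes s: "is_sing_vals A s" and t: "is_sing_vals A t"
  shows "esym1 t = esym1 s" "esym2 t = esym2 s"
proof -
  have nn: "0 \<le> s$i" "0 \<le> t$i" for i using s t by (auto simp: is_sing_vals_iff)
  have "(x - (s$1)^2) * (x - (s$2)^2) * (x - (s$3)^2) = (x - (t$1)^2) * (x - (t$2)^2) * (x - (t$3)^2)" for x
    using s t by (simp add: is_sing_vals_iff)
  from cubic_roots_perm[OF this] have
    "(t$1 = s$1 \<and> ((t$2 = s$2 \<and> t$3 = s$3) \<or> (t$2 = s$3 \<and> t$3 = s$2))) \<or>
     (t$1 = s$2 \<and> ((t$2 = s$1 \<and> t$3 = s$3) \<or> (t$2 = s$3 \<and> t$3 = s$1))) \<or>
     (t$1 = s$3 \<and> ((t$2 = s$1 \<and> t$3 = s$2) \<or> (t$2 = s$2 \<and> t$3 = s$1)))"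
    using nn by (simp add: power2_eq_iff_nonneg)
  then show "esym1 t = esym1 s" "esym2 t = esym2 s"
    by (auto simp: esym1_def esym2_def algebra_simps)
qed

lemma Pfun_eq_esym: "is_sing_vals A s \<Longrightarrow> Pfun lam A = esym2 s - lam * esym1 s"
  using sing_vals_esym_unique[OF sing_vals_valid]
  by (simp add: Pfun_def esym1_def esym2_def Let_def)

lemma Gfun_eq_esym:
  "is_sing_vals A s \<Longrightarrow> Gfun lam A = (esym2 s - trace (cof A)) - lam * (esym1 s - trace A)"
  by (simp add: Gfun_def Pfun_eq_esym Nfun_def algebra_simps)

lemma sing_vals_sq_coeffs:
  assumes "is_sing_vals A s"
  shows "(s$1)^2 + (s$2)^2 + (s$3)^2 = norm A^2"
    "(s$1)^2*(s$2)^2 + (s$1)^2*(s$3)^2 + (s$2)^2*(s$3)^2 = norm (cof A)^2"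
    "(s$1)^2*(s$2)^2*(s$3)^2 = det A^2"
proof -
  have "x^3 + (- (norm A^2)) * x^2 + norm (cof A)^2 * x + (- (det A^2)) =
     x^3 + (-((s$1)^2 + (s$2)^2 + (s$3)^2))*x^2
       + ((s$1)^2*(s$2)^2 + (s$1)^2*(s$3)^2 + (s$2)^2*(s$3)^2)*x + (-((s$1)^2*(s$2)^2*(s$3)^2))" for x
    using assms unfolding is_sing_vals_iff
    by (simp add: algebra_simps power2_eq_square power3_eq_cube)
  from cubic_coeffs_eq[OF this] show
    "(s$1)^2 + (s$2)^2 + (s$3)^2 = norm A^2"
    "(s$1)^2*(s$2)^2 + (s$1)^2*(s$3)^2 + (s$2)^2*(s$3)^2 = norm (cof A)^2"
    "(s$1)^2*(s$2)^2*(s$3)^2 = det A^2" by simp_all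
qed

lemma sing_vals_esym_relations:
  assumes s: "is_sing_vals A s"
  shows "esym1 s^2 = norm A^2 + 2 * esym2 s"
    "esym2 s^2 = norm (cof A)^2 + 2 * esym1 s * esym3 s"
    "esym3 s = \<bar>det A\<bar>"
    "0 \<le> esym1 s" "0 \<le> esym2 s"
proof -
  note c = sing_vals_sq_coeffs[OF s]
  have nn: "0 \<le> s$1" "0 \<le> s$2" "0 \<le> s$3" using s by (auto simp: is_sing_vals_iff)
  show "esym1 s^2 = norm A^2 + 2 * esym2 s"
    unfolding esym1_def esym2_def c(1)[symmetric] by (simp add: algebra_simps power2_eq_square)
  show "esym2 s^2 = norm (cof A)^2 + 2 * esym1 s * esym3 s"
    unfolding esym1_def esym2_def esym3_def c(2)[symmetric] by (simp add: algebra_simps power2_eq_square)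
  have "esym3 s^2 = \<bar>det A\<bar>^2" using c(3) by (simp add: esym3_def power_mult_distrib)
  moreover have "0 \<le> esym3 s" using nn by (simp add: esym3_def)
  ultimately show "esym3 s = \<bar>det A\<bar>" by (metis abs_ge_zero power2_eq_iff_nonneg)
  show "0 \<le> esym1 s" "0 \<le> esym2 s" using nn by (simp_all add: esym1_def esym2_def)
qed

lemma amgm3:
  fixes a b c :: real
  assumes "0 \<le> a" "0 \<le> b" "0 \<le> c"
  shows "27 * (a * b * c) \<le> (a + b + c)^3"
proof -
  have "(a+b+c)^3 - 27*(a*b*c) = (a+b+c)*((a-b)^2+(b-c)^2+(c-a)^2)/2 + 3*(a*(b-c)^2 + b*(a-c)^2 + c*(a-b)^2)"
    by algebra
  moreover have "0 \<le> (a+b+c)*((a-b)^2+(b-c)^2+(c-a)^2)/2" "0 \<le> a*(b-c)^2 + b*(a-c)^2 + c*(a-b)^2"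
    using assms by simp_all
  ultimately have "0 \<le> (a+b+c)^3 - 27*(a*b*c)" by simp
  then show ?thesis by simp
qed

lemma esym1_cube_ge: "is_sing_vals A s \<Longrightarrow> 27 * esym3 s \<le> esym1 s^3"
  unfolding esym1_def esym3_def is_sing_vals_iff using amgm3 by auto

lemma esym1_sq_le: "is_sing_vals A s \<Longrightarrow> esym1 s^2 \<le> 3 * norm A^2"
proof -
  assume s: "is_sing_vals A s"
  have "3 * ((s$1)^2 + (s$2)^2 + (s$3)^2) - esym1 s^2 = (s$1 - s$2)^2 + (s$2 - s$3)^2 + (s$3 - s$1)^2"
    unfolding esym1_def by algebra
  then show ?thesis using sing_vals_sq_coeffs(1)[OF s] by (smt (verit) zero_le_power2)
qed

lemma norm_sing_vals: "is_sing_vals A s \<Longrightarrow> norm s = norm A"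
  using sing_vals_sq_coeffs(1)[of A s]
  by (simp add: norm_vec_def L2_set_def sum_3 real_norm_def norm_eq_sqrt_inner[symmetric] add.assoc)

section \<open>Bounds on \<open>Gfun\<close>\<close>

lemma small_powers:
  fixes h :: real
  assumes "0 \<le> h" "h \<le> 1/1000"
  shows "h^2 \<le> h/1000" "h^3 \<le> h^2/1000" "h^2 \<le> 1/1000000" "h^3 \<le> 1/1000000000"
proof -
  have "h*h \<le> h*(1/1000)" "h^2*h \<le> h^2*(1/1000)" using assms by (intro mult_left_mono; simp)+
  then show "h^2 \<le> h/1000" "h^3 \<le> h^2/1000" by (simp_all add: power2_eq_square power3_eq_cube)
  then show "h^2 \<le> 1/1000000" "h^3 \<le> 1/1000000000" using assms by simp_all
qed

text \<open>In the following lemmas, for \<open>B = 1 + H\<close> with \<open>h = |H|\<close> small,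
  \<open>t, k, dl\<close> stand for the trace, the trace of the cofactor matrix and the determinant of \<open>H\<close>,
  \<open>w, wc\<close> for the squared skew parts of \<open>H\<close> and \<open>cof B\<close>, and \<open>z, u\<close> for the deviations of the
  first two elementary symmetric functions of the singular values of \<open>B\<close> from
  \<open>trace B\<close> and \<open>trace (cof B)\<close>; then \<open>Gfun 1 B = u - z\<close>.\<close>

lemma sv_sum_defect_small:
  fixes h t k dl z :: real
  assumes h: "0 \<le> h" "h \<le> 1/1000"
    and ht: "\<bar>t\<bar> \<le> 2*h" and hk: "\<bar>k\<bar> \<le> 6*h^2" and hd: "\<bar>dl\<bar> \<le> 6*h^3"
    and nonneg: "0 \<le> 3 + t + z"
    and amgm: "27 * \<bar>1 + t + k + dl\<bar> \<le> (3 + t + z)^3"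
    and cs: "(3 + t + z)^2 \<le> 3 * (3 + 2*t + h^2)"
  shows "\<bar>z\<bar> \<le> 5/1000"
proof -
  note hs = small_powers[OF h]
  define s1 where "s1 = 3 + t + z"
  have "9979/10000 \<le> 1 + t + k + dl" using ht hk hd h hs by (simp add: abs_le_iff; linarith)
  then have "27 * (9979/10000) \<le> s1^3" using amgm by (simp add: s1_def)
  then have lo: "2997/1000 \<le> s1"
  proof (rule contrapos_pp)
    assume "\<not> 2997/1000 \<le> s1"
    then have "s1^3 < (2997/1000)^3" using nonneg by (intro power_strict_mono) (auto simp: s1_def)
    then show "\<not> 27 * (9979/10000) \<le> s1^3" by (simp add: power3_eq_cube)
  qed
  have "s1^2 \<le> (3 + 2*h)^2"
  proof -
    have "s1^2 \<le> 9 + 12*h + 3*h^2" using cs ht by (simp add: s1_def)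
    also have "\<dots> \<le> (3 + 2*h)^2" by (simp add: power2_eq_square algebra_simps)
    finally show ?thesis .
  qed
  then have hi: "s1 \<le> 3 + 2*h" using h by (simp add: abs_le_square_iff[symmetric])
  show ?thesis using lo hi ht h unfolding s1_def by (simp add: abs_le_iff; linarith)
qed

lemma sv_defect_identity:
  fixes t k dl w wc z u :: real
  defines "G \<equiv> u - z" and "D \<equiv> 2 + t + z/2" and "kap \<equiv> 3 + 2*t + k" and "d \<equiv> 1 + t + k + dl"
  assumes R1: "(3+t+z)^2 = (3+t)^2 - 2*(3 + 2*t + k) + 2*w + 2*(3 + 2*t + k + u)"
    and R2: "(3 + 2*t + k + u)^2 = (3+2*t+k)^2 - 2*(3+t)*(1+t+k+dl) + 2*wc + 2*(3+t+z)*\<bar>1+t+k+dl\<bar>"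
    and d: "0 \<le> 1 + t + k + dl"
  shows "z * D = G + w"
    and "G * ((2*kap + G + 2*z)*D - 2*(d - kap)) = 2*(wc - w)*D + w*(z + 2*dl) - z^2*D"
proof -
  have u: "u = (3+t)*z + z^2/2 - w" using R1 by (simp add: power2_eq_square algebra_simps)
  show zD: "z * D = G + w" unfolding G_def D_def u by (simp add: algebra_simps power2_eq_square)
  have "2*kap*u + u^2 = 2*wc + 2*z*d"
    using R2 d unfolding kap_def d_def by (simp add: power2_eq_square algebra_simps)
  then have "G*(2*kap + G + 2*z) = 2*wc + 2*z*(d - kap) - z^2"
    unfolding G_def by algebra
  then have "G*(2*kap + G + 2*z)*D = 2*wc*D + 2*(d - kap)*(z*D) - z^2*D"
    by algebra
  also have "\<dots> = 2*wc*D + 2*(d - kap)*(G + w) - z^2*D" using zD by simp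
  finally have "G * ((2*kap + G + 2*z)*D - 2*(d - kap)) = 2*wc*D + 2*(d - kap)*w - z^2*D"
    by algebra
  also have "2*wc*D + 2*(d - kap)*w = 2*(wc - w)*D + w*(z + 2*dl)"
    unfolding D_def d_def kap_def by algebra
  finally show "G * ((2*kap + G + 2*z)*D - 2*(d - kap)) = 2*(wc - w)*D + w*(z + 2*dl) - z^2*D" .
qed

lemma sv_defect_rhs_bound:
  fixes h dl w wc z G D :: real
  assumes h: "0 \<le> h" "h \<le> 1/1000" and hd: "\<bar>dl\<bar> \<le> 6*h^3"
    and hw: "0 \<le> w" "w \<le> h^2" and hwc: "\<bar>wc - w\<bar> \<le> 25*h^3"
    and Db: "1995/1000 \<le> D" "D \<le> 2005/1000"
    and Gb: "\<bar>G\<bar> \<le> 11/1000" and zle: "\<bar>z\<bar> \<le> \<bar>G\<bar> + h^2"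
  shows "\<bar>2*(wc - w)*D + w*(z + 2*dl) - z^2*D\<bar> \<le> 101*h^3 + (225/10000)*\<bar>G\<bar>"
proof -
  note hs = small_powers[OF h]
  have q1: "\<bar>2*(wc - w)*D\<bar> \<le> (401/4)*h^3"
  proof -
    have "\<bar>2*(wc - w)*D\<bar> \<le> 2*(25*h^3) * (2005/1000)"
      unfolding abs_mult using hwc Db h by (intro mult_mono) auto
    then show ?thesis by simp
  qed
  have q2: "\<bar>w*(z + 2*dl)\<bar> \<le> (1/1000000)*\<bar>G\<bar> + (2/1000)*h^3"
  proof -
    have "\<bar>w*(z + 2*dl)\<bar> \<le> h^2 * (\<bar>G\<bar> + h^2 + 12*h^3)"
      unfolding abs_mult using hw zle hd by (intro mult_mono) (auto simp: abs_le_iff)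
    also have "\<dots> = h^2 * \<bar>G\<bar> + h^3 * h + (12*h^2)*h^3"
      by (simp add: algebra_simps power2_eq_square power3_eq_cube)
    also have "\<dots> \<le> (1/1000000)*\<bar>G\<bar> + h^3 * (1/1000) + (1/1000)*h^3"
      using hs h by (intro add_mono mult_right_mono mult_left_mono) auto
    finally show ?thesis by simp
  qed
  have q3: "\<bar>z^2*D\<bar> \<le> (222555/10000000)*\<bar>G\<bar> + (2005/1000000)*h^3"
  proof -
    have "z^2 \<le> (\<bar>G\<bar> + h^2)^2" using zle by (metis abs_ge_zero power2_abs power_mono)
    also have "\<dots> = \<bar>G\<bar>*\<bar>G\<bar> + (2*h^2)*\<bar>G\<bar> + h^3 * h"
      by (simp add: power2_eq_square power3_eq_cube algebra_simps)
    also have "\<dots> \<le> (11/1000)*\<bar>G\<bar> + (1/10000)*\<bar>G\<bar> + h^3 * (1/1000)"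
      using Gb hs h by (intro add_mono mult_right_mono mult_left_mono) auto
    finally have "\<bar>z^2\<bar> \<le> (111/10000)*\<bar>G\<bar> + (1/1000)*h^3" by simp
    then have "\<bar>z^2*D\<bar> \<le> ((111/10000)*\<bar>G\<bar> + (1/1000)*h^3) * (2005/1000)"
      unfolding abs_mult using Db h by (intro mult_mono) auto
    then show ?thesis by (simp add: algebra_simps)
  qed
  have "0 \<le> h^3" using h by simp
  then show ?thesis using q1 q2 q3 abs_triangle_ineq4 abs_triangle_ineq by (simp add: abs_le_iff; linarith)
qed

text \<open>The identity says \<open>G * Cf = Q\<close> with \<open>Cf \<ge> 15\<close> and \<open>Q\<close> of order \<open>h^3\<close> plus a small multiple
  of \<open>|G|\<close>, since \<open>z\<close> is of order \<open>|G| + h^2\<close> by the first equation.\<close>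
lemma sv_defect_cubic:
  fixes h t k dl w wc z G :: real
  defines "D \<equiv> 2 + t + z/2" and "kap \<equiv> 3 + 2*t + k" and "d \<equiv> 1 + t + k + dl"
  assumes h: "0 \<le> h" "h \<le> 1/1000"
    and ht: "\<bar>t\<bar> \<le> 2*h" and hk: "\<bar>k\<bar> \<le> 6*h^2" and hd: "\<bar>dl\<bar> \<le> 6*h^3"
    and hw: "0 \<le> w" "w \<le> h^2" and hwc: "\<bar>wc - w\<bar> \<le> 25*h^3"
    and hz: "\<bar>z\<bar> \<le> 5/1000"
    and zD: "z * D = G + w"
    and key: "G * ((2*kap + G + 2*z)*D - 2*(d - kap)) = 2*(wc - w)*D + w*(z + 2*dl) - z^2*D"
  shows "\<bar>G\<bar> \<le> 7*h^3"
proof -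
  note hs = small_powers[OF h]
  have Db: "1995/1000 \<le> D" "D \<le> 2005/1000" unfolding D_def using hz ht h by auto
  have GR: "G = z*(2+t) + z^2/2 - w" using zD unfolding D_def by (simp add: algebra_simps power2_eq_square)
  have Gb: "\<bar>G\<bar> \<le> 11/1000"
  proof -
    have "\<bar>z*(2+t)\<bar> \<le> (5/1000) * (2002/1000)"
      unfolding abs_mult using hz ht h by (intro mult_mono) auto
    moreover have "z^2 \<le> (5/1000)^2" using hz abs_le_square_iff[of z "5/1000"] by simp
    then have "z^2 \<le> 1/40000" by (simp add: power_divide)
    ultimately show ?thesis
      unfolding GR abs_le_iff using hw hs zero_le_power2[of z] by linarith
  qed
  define Cf where "Cf = (2*kap + G + 2*z)*D - 2*(d - kap)"
  have Cfb: "15 \<le> Cf"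
  proof -
    have "597/100 \<le> 2*kap + G + 2*z" unfolding kap_def using ht hk Gb hz h hs by (simp add: abs_le_iff; linarith)
    then have "(597/100) * (1995/1000) \<le> (2*kap + G + 2*z)*D" using Db by (intro mult_mono) auto
    moreover have "399/100 \<le> - 2*(d - kap)" unfolding d_def kap_def using ht hd h hs by (simp add: abs_le_iff; linarith)
    ultimately show ?thesis unfolding Cf_def by simp
  qed
  have zle: "\<bar>z\<bar> \<le> \<bar>G\<bar> + h^2"
  proof -
    have "\<bar>z\<bar> \<le> \<bar>z\<bar> * D" using Db by (simp add: mult_le_cancel_left1)
    also have "\<dots> = \<bar>G + w\<bar>" using zD Db by (simp add: abs_mult flip: zD)
    also have "\<dots> \<le> \<bar>G\<bar> + h^2" using hw by (simp add: abs_le_iff; linarith)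
    finally show ?thesis .
  qed
  have Qb: "\<bar>2*(wc - w)*D + w*(z + 2*dl) - z^2*D\<bar> \<le> 101*h^3 + (225/10000)*\<bar>G\<bar>"
    by (rule sv_defect_rhs_bound[OF h hd hw hwc Db Gb zle])
  have "15 * \<bar>G\<bar> \<le> Cf * \<bar>G\<bar>" using Cfb by (intro mult_right_mono) auto
  also have "\<dots> = \<bar>G * Cf\<bar>" using Cfb by (simp add: abs_mult)
  also have "\<dots> \<le> 101*h^3 + (225/10000)*\<bar>G\<bar>" using key Qb unfolding Cf_def by simp
  finally show ?thesis using h by simp
qed

lemma abs_entry_le_norm: "\<bar>(H::mat3)$i$j\<bar> \<le> norm H"
  using component_le_norm_cart[of "H$i" j] Finite_Cartesian_Product.norm_nth_le[of H i] by simp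

lemma abs_cof_entry_le: "\<bar>cof H $i$j\<bar> \<le> 2 * norm H^2"
proof -
  have "\<bar>a*b - c*d\<bar> \<le> 2 * norm H^2"
    if "\<bar>a\<bar> \<le> norm H" "\<bar>b\<bar> \<le> norm H" "\<bar>c\<bar> \<le> norm H" "\<bar>d\<bar> \<le> norm H" for a b c d
  proof -
    have "\<bar>a*b\<bar> \<le> norm H * norm H" "\<bar>c*d\<bar> \<le> norm H * norm H"
      unfolding abs_mult using that by (intro mult_mono; simp)+
    then show ?thesis by (simp add: abs_le_iff power2_eq_square; linarith)
  qed
  note * = this[OF abs_entry_le_norm abs_entry_le_norm abs_entry_le_norm abs_entry_le_norm]
  show ?thesis using exhaust_3[of i] exhaust_3[of j] by (auto simp: cof_mat3 *)
qed

lemma norm_cof_le: "norm (cof H) \<le> 6 * norm H^2"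
proof -
  have e: "(cof H $i$j)^2 \<le> (2 * norm H^2)^2" for i j
    using abs_cof_entry_le[of H i j] power_mono[of "\<bar>cof H $i$j\<bar>" "2 * norm H^2" 2] by simp
  have "norm (cof H)^2 \<le> 9 * (2 * norm H^2)^2"
    unfolding norm_mat3_sq[of "cof H"]
    using e[of 1 1] e[of 1 2] e[of 1 3] e[of 2 1] e[of 2 2] e[of 2 3] e[of 3 1] e[of 3 2] e[of 3 3]
    by linarith
  also have "\<dots> = (6 * norm H^2)^2" by (simp add: power2_eq_square)
  finally show ?thesis by (rule power2_le_imp_le) simp
qed

lemma abs_det_le: "\<bar>det (H::mat3)\<bar> \<le> 6 * norm H^3"
proof -
  have p: "\<bar>H$i$j * H$i'$j' * H$i''$j''\<bar> \<le> norm H^3" for i j i' j' i'' j''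
    unfolding abs_mult power3_eq_cube using abs_entry_le_norm
    by (intro mult_mono) (auto intro: mult_nonneg_nonneg)
  show ?thesis unfolding det_3
    using p[of 1 1 2 2 3 3] p[of 1 2 2 3 3 1] p[of 1 3 2 1 3 2] p[of 1 1 2 3 3 2] p[of 1 2 2 1 3 3] p[of 1 3 2 2 3 1]
    by (simp add: abs_le_iff; linarith)
qed

lemma trace_id_plus: "trace (mat 1 + H :: mat3) = 3 + trace H"
  by (simp add: trace_mat3 mat_def)

lemma trace_cof_id_plus: "trace (cof (mat 1 + H)) = 3 + 2 * trace H + trace (cof H)"
  unfolding cof_id_plus by (simp add: trace_mat3 transpose_def mat_def)

lemma norm_id_plus_sq: "norm (mat 1 + H :: mat3)^2 = 3 + 2 * trace H + norm H^2"
  unfolding norm_mat3_sq by (simp add: trace_mat3 mat_def power2_eq_square algebra_simps)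

lemma skew_part_id_plus: "skew_part (mat 1 + H) = skew_part H"
  by (simp add: skew_part_def vec_eq_iff transpose_def mat_def)

lemma skew_part_cof_id_plus: "skew_part (cof (mat 1 + H)) = skew_part H + skew_part (cof H)"
  unfolding cof_id_plus by (simp add: skew_part_def vec_eq_iff transpose_def mat_def algebra_simps)

lemma skew_part_cof_id_plus_sq:
  fixes H :: mat3
  assumes small: "norm H \<le> 1/1000"
  shows "\<bar>norm (skew_part (cof (mat 1 + H)))^2 - norm (skew_part H)^2\<bar> \<le> 25 * norm H^3"
proof -
  define h where "h = norm H"
  have h: "0 \<le> h" "h \<le> 1/1000" using small by (simp_all add: h_def)
  define K K' where "K = skew_part H" and "K' = skew_part (cof H)"
  have K: "norm K \<le> h" unfolding K_def h_def by (rule norm_skew_part_le)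
  have K': "norm K' \<le> 6*h^2" unfolding K'_def h_def using norm_skew_part_le norm_cof_le by (rule order_trans)
  have "skew_part (cof (mat 1 + H)) = K + K'" unfolding K_def K'_def by (rule skew_part_cof_id_plus)
  then have "norm (skew_part (cof (mat 1 + H)))^2 - norm (skew_part H)^2 = 2 * inner K K' + norm K'^2"
    by (simp add: K_def[symmetric] power2_norm_eq_inner inner_add algebra_simps inner_commute)
  moreover have "norm K * norm K' \<le> h * (6*h^2)" using K K' h by (intro mult_mono) auto
  moreover have "norm K'^2 \<le> (6*h^2)^2" using K' by (intro power_mono) auto
  ultimately have "\<bar>norm (skew_part (cof (mat 1 + H)))^2 - norm (skew_part H)^2\<bar> \<le> 2 * (h * (6*h^2)) + (6*h^2)^2"
    using Cauchy_Schwarz_ineq2[of K K'] zero_le_power2[of "norm K'"] unfolding abs_le_iff by linarith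
  also have "\<dots> = 12*h^3 + 36*h^3*h" by (simp add: power2_eq_square power3_eq_cube)
  also have "\<dots> \<le> 12*h^3 + 36*h^3*(1/1000)" using h by (intro add_left_mono mult_left_mono) auto
  also have "\<dots> \<le> 25*h^3" using h by simp
  finally show ?thesis by (simp add: h_def)
qed

lemma Gfun_cubic_near_identity:
  fixes H :: mat3
  assumes small: "norm H \<le> 1/1000"
  shows "\<bar>Gfun 1 (mat 1 + H)\<bar> \<le> 7 * norm H^3"
proof -
  define B h t k dl where "B = mat 1 + H" and "h = norm H" and "t = trace H"
    and "k = trace (cof H)" and "dl = det H"
  define w wc where "w = norm (skew_part H)^2" and "wc = norm (skew_part (cof B))^2"
  have h: "0 \<le> h" "h \<le> 1/1000" using small by (simp_all add: h_def)
  have ht: "\<bar>t\<bar> \<le> 2*h" unfolding t_def h_def by (rule abs_trace_le)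
  have hk: "\<bar>k\<bar> \<le> 6*h^2"
    unfolding k_def h_def trace_mat3
    using abs_cof_entry_le[of H 1 1] abs_cof_entry_le[of H 2 2] abs_cof_entry_le[of H 3 3]
    by (simp add: abs_le_iff; linarith)
  have hd: "\<bar>dl\<bar> \<le> 6*h^3" unfolding dl_def h_def by (rule abs_det_le)
  have hw: "0 \<le> w" "w \<le> h^2"
    unfolding w_def h_def using norm_skew_part_le by (auto intro: power_mono)
  have hwc: "\<bar>wc - w\<bar> \<le> 25*h^3"
    unfolding wc_def w_def B_def h_def using small by (rule skew_part_cof_id_plus_sq)
  obtain s where s: "is_sing_vals B s" using sing_vals_exist by blast
  note rel = sing_vals_esym_relations[OF s]
  define z u where "z = esym1 s - trace B" and "u = esym2 s - trace (cof B)"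
  have trB: "trace B = 3 + t" and trcofB: "trace (cof B) = 3 + 2*t + k" and detB: "det B = 1 + t + k + dl"
    by (simp_all add: B_def t_def k_def dl_def trace_id_plus trace_cof_id_plus det_id_plus)
  have s1: "esym1 s = 3 + t + z" and s2: "esym2 s = 3 + 2*t + k + u"
    by (simp_all add: z_def u_def trB trcofB)
  have G: "Gfun 1 B = u - z" by (simp add: Gfun_eq_esym[OF s] z_def u_def)
  have R1: "(3+t+z)^2 = (3+t)^2 - 2*(3 + 2*t + k) + 2*w + 2*(3 + 2*t + k + u)"
    using rel(1) norm_sq_eq_trace_cof[of B] skew_part_id_plus[of H]
    by (simp add: s1 s2 trB trcofB w_def flip: B_def)
  have R2: "(3 + 2*t + k + u)^2 = (3+2*t+k)^2 - 2*(3+t)*(1+t+k+dl) + 2*wc + 2*(3+t+z)*\<bar>1+t+k+dl\<bar>"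
    using rel(2) rel(3) norm_sq_eq_trace_cof[of "cof B"]
    by (simp add: s1 s2 trB trcofB detB wc_def cof_cof_mat3 trace_scaleR)
  have "0 \<le> 1 + t + k + dl" using ht hk hd h small_powers[OF h] by (simp add: abs_le_iff; linarith)
  have "\<bar>z\<bar> \<le> 5/1000"
  proof (rule sv_sum_defect_small[OF h ht hk hd])
    show "0 \<le> 3 + t + z" using rel(4) s1 by simp
    show "27 * \<bar>1 + t + k + dl\<bar> \<le> (3 + t + z)^3" using esym1_cube_ge[OF s] rel(3) s1 detB by simp
    show "(3 + t + z)^2 \<le> 3 * (3 + 2*t + h^2)"
      using esym1_sq_le[OF s] s1 norm_id_plus_sq[of H] by (simp add: B_def t_def h_def)
  qed
  have "\<bar>u - z\<bar> \<le> 7*h^3"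
    by (rule sv_defect_cubic[OF h ht hk hd hw hwc \<open>\<bar>z\<bar> \<le> 5/1000\<close>
          sv_defect_identity[OF R1 R2 \<open>0 \<le> 1 + t + k + dl\<close>]])
  then show ?thesis using G by (simp add: B_def h_def)
qed

lemma is_sing_vals_scaleR:
  assumes c: "0 < c" and s: "is_sing_vals A s"
  shows "is_sing_vals (c *\<^sub>R A) (c *\<^sub>R s)"
  unfolding is_sing_vals_iff
proof (intro conjI allI)
  fix i show "0 \<le> (c *\<^sub>R s)$i" using s c by (simp add: is_sing_vals_iff)
next
  fix x
  define y where "y = x / c^2"
  have xy: "x = c^2 * y" unfolding y_def using c by simp
  have "y^3 - norm A^2 * y^2 + norm (cof A)^2 * y - det A^2 = (y - (s$1)^2) * (y - (s$2)^2) * (y - (s$3)^2)"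
    using s unfolding is_sing_vals_iff by blast
  then show "x^3 - norm (c *\<^sub>R A)^2 * x^2 + norm (cof (c *\<^sub>R A))^2 * x - det (c *\<^sub>R A)^2 =
      (x - ((c *\<^sub>R s)$1)^2) * (x - ((c *\<^sub>R s)$2)^2) * (x - ((c *\<^sub>R s)$3)^2)"
    unfolding cof_scaleR det_scaleR_mat3 xy using c by (simp add: power_mult_distrib) algebra
qed

lemma Gfun_scaleR:
  assumes "0 < c"
  shows "Gfun (c * lam) (c *\<^sub>R A) = c^2 * Gfun lam A"
proof -
  obtain s where s: "is_sing_vals A s" using sing_vals_exist by blast
  show ?thesis
    unfolding Gfun_eq_esym[OF s] Gfun_eq_esym[OF is_sing_vals_scaleR[OF assms s]]
    by (simp add: esym1_def esym2_def cof_scaleR trace_scaleR power2_eq_square algebra_simps)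
qed

lemma Gfun_cubic_bound:
  assumes lam: "0 < lam" and small: "norm (A - lam *\<^sub>R mat 1) \<le> lam/1000"
  shows "\<bar>Gfun lam A\<bar> \<le> 7 * norm (A - lam *\<^sub>R mat 1)^3 / lam"
proof -
  define H where "H = (1/lam) *\<^sub>R (A - lam *\<^sub>R mat 1)"
  have A: "A = lam *\<^sub>R (mat 1 + H)" using lam by (simp add: H_def algebra_simps)
  have nH: "norm H = norm (A - lam *\<^sub>R mat 1) / lam" using lam by (simp add: H_def)
  have "Gfun lam A = lam^2 * Gfun 1 (mat 1 + H)"
    using Gfun_scaleR[OF lam, of 1 "mat 1 + H"] A by simp
  then have "\<bar>Gfun lam A\<bar> = lam^2 * \<bar>Gfun 1 (mat 1 + H)\<bar>" by (simp add: abs_mult)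
  also have "\<dots> \<le> lam^2 * (7 * norm H^3)"
    using Gfun_cubic_near_identity[of H] small lam by (intro mult_left_mono) (auto simp: nH divide_le_eq)
  also have "\<dots> = 7 * norm (A - lam *\<^sub>R mat 1)^3 / lam"
    using lam by (simp add: nH power3_eq_cube power2_eq_square field_simps)
  finally show ?thesis .
qed

lemma abs_Gfun_le_norm:
  assumes lam: "0 \<le> lam"
  shows "\<bar>Gfun lam A\<bar> \<le> 4 * norm A^2 + 4 * lam * norm A"
proof -
  obtain s where s: "is_sing_vals A s" using sing_vals_exist by blast
  note rel = sing_vals_esym_relations[OF s]
  define n where "n = norm A"
  have "esym1 s^2 \<le> 4 * n^2" using esym1_sq_le[OF s] zero_le_power2[of "norm A"] unfolding n_def by linarith
  then have "esym1 s^2 \<le> (2*n)^2" by (simp add: power_mult_distrib)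
  then have s1: "esym1 s \<le> 2*n" by (rule power2_le_imp_le) (simp add: n_def)
  have s2: "esym2 s \<le> n^2" using esym1_sq_le[OF s] rel(1) by (simp add: n_def)
  have tr: "\<bar>trace A\<bar> \<le> 2*n" unfolding n_def by (rule abs_trace_le)
  have "trace A^2 \<le> (2*n)^2" using tr by (metis abs_ge_zero power2_abs power_mono)
  then have "trace A^2 \<le> 4*n^2" by (simp add: power_mult_distrib)
  moreover have "norm (skew_part A)^2 \<le> n^2" using norm_skew_part_le by (simp add: n_def power_mono)
  ultimately have trc: "\<bar>trace (cof A)\<bar> \<le> 3 * n^2"
    using norm_sq_eq_trace_cof[of A] zero_le_power2[of "trace A"] zero_le_power2[of "norm (skew_part A)"]
    unfolding abs_le_iff n_def by linarith
  have "\<bar>Gfun lam A\<bar> = \<bar>esym2 s - lam * esym1 s - (trace (cof A) - lam * trace A)\<bar>"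
    by (simp add: Gfun_eq_esym[OF s] algebra_simps)
  also have "\<dots> \<le> esym2 s + \<bar>trace (cof A)\<bar> + lam * esym1 s + \<bar>lam * trace A\<bar>"
    using rel(4,5) lam mult_nonneg_nonneg[OF lam rel(4)] unfolding abs_le_iff by linarith
  also have "\<dots> = esym2 s + \<bar>trace (cof A)\<bar> + lam * esym1 s + lam * \<bar>trace A\<bar>"
    using lam by (simp add: abs_mult)
  also have "\<dots> \<le> n^2 + 3*n^2 + lam*(2*n) + lam*(2*n)"
    using s1 s2 tr trc lam by (intro add_mono mult_left_mono) auto
  finally show ?thesis by (simp add: n_def algebra_simps)
qed

lemma abs_Gfun_le_quadratic:
  fixes A :: mat3
  assumes lam: "0 \<le> lam"
  defines "h \<equiv> norm (A - lam *\<^sub>R mat 1)"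
  shows "\<bar>Gfun lam A\<bar> \<le> 4 * (h + 2*lam)^2 + 4 * lam * (h + 2*lam)"
proof -
  have "norm (lam *\<^sub>R (mat 1::mat3)) \<le> 2*lam"
    using lam by (simp add: norm_mat1_mat3 mult_left_mono real_sqrt_le_iff[of 3 4, simplified] mult.commute)
  then have "norm A \<le> h + 2*lam"
    using norm_triangle_ineq[of "A - lam *\<^sub>R mat 1" "lam *\<^sub>R mat 1"] by (simp add: h_def)
  then have "norm A^2 \<le> (h + 2*lam)^2" "lam * norm A \<le> lam * (h + 2*lam)"
    using lam by (auto intro: power_mono mult_left_mono)
  then show ?thesis using abs_Gfun_le_norm[OF lam, of A] by linarith
qed

section \<open>Continuity\<close>

lemma tendsto_det_mat3: "(X \<longlongrightarrow> A) F \<Longrightarrow> ((\<lambda>n. det (X n)) \<longlongrightarrow> det (A::mat3)) F"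
  unfolding det_3 by (intro tendsto_intros)

lemma tendsto_cof: "(X \<longlongrightarrow> A) F \<Longrightarrow> ((\<lambda>n. cof (X n)) \<longlongrightarrow> cof A) F"
  unfolding cof_def det_def by (intro tendsto_intros) (auto intro: tendsto_intros)

lemma continuous_on_cof: "continuous_on S cof"
  unfolding continuous_on_def using tendsto_cof[OF tendsto_ident_at] by simp

lemma is_sing_vals_limit:
  assumes A: "X \<longlonglongrightarrow> A" and t: "s \<longlonglongrightarrow> t" and sv: "\<And>n. is_sing_vals (X n) (s n)"
  shows "is_sing_vals A t"
  unfolding is_sing_vals_iff
proof (intro conjI allI)
  have ti: "(\<lambda>n. s n $ i) \<longlonglongrightarrow> t $ i" for i using t by (rule tendsto_vec_nth)
  fix i
  show "0 \<le> t$i" using sv by (intro LIMSEQ_le_const[OF ti]) (auto simp: is_sing_vals_iff)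
next
  fix x
  have "(\<lambda>n. x^3 - norm (X n)^2 * x^2 + norm (cof (X n))^2 * x - det (X n)^2)
          \<longlonglongrightarrow> x^3 - norm A^2 * x^2 + norm (cof A)^2 * x - det A^2"
    by (intro tendsto_intros tendsto_cof tendsto_det_mat3 A)
  moreover have "(\<lambda>n. (x - (s n$1)^2) * (x - (s n$2)^2) * (x - (s n$3)^2))
          \<longlonglongrightarrow> (x - (t$1)^2) * (x - (t$2)^2) * (x - (t$3)^2)"
    by (intro tendsto_intros t)
  ultimately show "x^3 - norm A^2 * x^2 + norm (cof A)^2 * x - det A^2 = (x - (t$1)^2) * (x - (t$2)^2) * (x - (t$3)^2)"
    using sv by (simp add: is_sing_vals_iff LIMSEQ_unique)
qed

definition sv_sum :: "mat3 \<Rightarrow> real" where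
  "sv_sum A = esym1 (sing_vals A)"

lemma sv_sum_bounds: "0 \<le> sv_sum A" "sv_sum A \<le> 2 * norm A"
proof -
  note s = sing_vals_valid[of A]
  show "0 \<le> sv_sum A" unfolding sv_sum_def using sing_vals_esym_relations(4)[OF s] .
  have "sv_sum A^2 \<le> 4 * norm A^2"
    using esym1_sq_le[OF s] zero_le_power2[of "norm A"] unfolding sv_sum_def by linarith
  then have "sv_sum A^2 \<le> (2 * norm A)^2" by (simp add: power_mult_distrib)
  then show "sv_sum A \<le> 2 * norm A" by (rule power2_le_imp_le) simp
qed

text \<open>Singular values range over a compact set and their defining relation is closed, so
  the graph of \<open>sv_sum\<close> is closed over bounded sets.\<close>
lemma closed_graph_sv_sum: "closed ((\<lambda>A. (A, sv_sum A)) ` cball (0::mat3) R)"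
  unfolding closed_sequential_limits
proof (intro allI impI, elim conjE)
  fix x :: "nat \<Rightarrow> mat3 \<times> real" and l
  assume xin: "\<forall>n. x n \<in> (\<lambda>A. (A, sv_sum A)) ` cball 0 R" and lim: "x \<longlonglongrightarrow> l"
  define A where "A n = fst (x n)" for n
  have xA: "x n = (A n, sv_sum (A n))" and AR: "A n \<in> cball 0 R" for n
  proof -
    obtain B where "B \<in> cball 0 R" "x n = (B, sv_sum B)" using xin by blast
    then show "x n = (A n, sv_sum (A n))" "A n \<in> cball 0 R" by (simp_all add: A_def)
  qed
  have Alim: "A \<longlonglongrightarrow> fst l" unfolding A_def by (intro tendsto_fst lim)
  have lR: "fst l \<in> cball 0 R"
    using closed_sequentially[OF closed_cball, of A] AR Alim by blast
  define s where "s n = sing_vals (A n)" for n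
  have sv: "is_sing_vals (A n) (s n)" for n unfolding s_def by (rule sing_vals_valid)
  have "s n \<in> cball 0 R" for n using AR[of n] norm_sing_vals[OF sv[of n]] by simp
  then obtain t r where r: "strict_mono r" and t: "(s \<circ> r) \<longlonglongrightarrow> t"
    using seq_compactE[OF compact_imp_seq_compact[OF compact_cball[of "0::real^3" R]]] by metis
  have tv: "is_sing_vals (fst l) t"
    using is_sing_vals_limit[OF LIMSEQ_subseq_LIMSEQ[OF Alim r] t] sv by simp
  have "(\<lambda>n. sv_sum (A (r n))) \<longlonglongrightarrow> esym1 t"
    using t unfolding sv_sum_def esym1_def s_def o_def by (intro tendsto_intros)
  moreover have "(\<lambda>n. sv_sum (A (r n))) \<longlonglongrightarrow> snd l"
    using LIMSEQ_subseq_LIMSEQ[OF tendsto_snd[OF lim] r] by (simp add: xA o_def)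
  moreover have "sv_sum (fst l) = esym1 t"
    unfolding sv_sum_def using sing_vals_esym_unique[OF tv sing_vals_valid] by simp
  ultimately have "snd l = sv_sum (fst l)" using LIMSEQ_unique by metis
  then have "l = (fst l, sv_sum (fst l))" by (simp add: prod_eq_iff)
  then show "l \<in> (\<lambda>A. (A, sv_sum A)) ` cball 0 R" using lR by (metis image_eqI)
qed

lemma continuous_on_sv_sum: "continuous_on UNIV sv_sum"
proof -
  have "continuous_on (cball 0 R) sv_sum" for R
  proof (rule continuous_from_closed_graph[of "{0..2*R}"])
    show "sv_sum \<in> cball 0 R \<rightarrow> {0..2*R}"
    proof
      fix A :: mat3 assume "A \<in> cball 0 R"
      then show "sv_sum A \<in> {0..2*R}" using sv_sum_bounds[of A] by simp
    qed
  qed (simp_all add: closed_graph_sv_sum)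
  then have "isCont sv_sum A" for A
    by (rule continuous_on_interior[of "cball 0 (norm A + 1)"]) (simp add: interior_cball)
  then show ?thesis by (simp add: continuous_at_imp_continuous_on)
qed

lemma continuous_on_Gfun: "continuous_on UNIV (Gfun lam)"
proof -
  have "Gfun lam A = (sv_sum A^2 - norm A^2)/2 - lam * sv_sum A - (trace (cof A) - lam * trace A)" for A
    using sing_vals_esym_relations(1)[OF sing_vals_valid[of A]]
    by (simp add: Gfun_eq_esym[OF sing_vals_valid] sv_sum_def algebra_simps)
  moreover have "continuous_on UNIV (\<lambda>A. (sv_sum A^2 - norm A^2)/2 - lam * sv_sum A - (trace (cof A) - lam * trace A))"
    unfolding trace_def by (intro continuous_intros continuous_on_sv_sum continuous_on_cof) auto
  ultimately show ?thesis by simp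
qed

section \<open>The suprema \<open>M2\<close> and \<open>M3\<close>\<close>

definition witness :: "real \<Rightarrow> real \<Rightarrow> mat3" where
  "witness lam e = vector [vector [lam, e, 0], vector [0, lam, 0], vector [0, 0, lam + e]]"

lemma witness_entries:
  "witness lam e $1$1 = lam" "witness lam e $1$2 = e" "witness lam e $1$3 = 0"
  "witness lam e $2$1 = 0" "witness lam e $2$2 = lam" "witness lam e $2$3 = 0"
  "witness lam e $3$1 = 0" "witness lam e $3$2 = 0" "witness lam e $3$3 = lam + e"
  unfolding witness_def by simp_all

lemma norm_witness_dev: "norm (witness lam e - lam *\<^sub>R mat 1) = sqrt 2 * \<bar>e\<bar>"
proof -
  have "norm (witness lam e - lam *\<^sub>R mat 1)^2 = (sqrt 2 * \<bar>e\<bar>)^2"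
    unfolding norm_mat3_sq by (simp add: witness_entries mat_def power_mult_distrib)
  then show ?thesis by (simp add: power2_eq_iff_nonneg)
qed

lemma Gfun_witness:
  assumes lam: "0 \<le> lam" and e: "0 \<le> e"
  shows "Gfun lam (witness lam e) = e * (sqrt (4*lam^2 + e^2) - 2*lam)"
proof -
  define S where "S = sqrt (4*lam^2 + e^2)"
  have SS: "S^2 = 4*lam^2 + e^2" unfolding S_def by simp
  have Se: "e \<le> S" unfolding S_def by (rule real_le_rsqrt) simp
  define a b where "a = (S + e)/2" and "b = (S - e)/2"
  have ab: "a + b = S" "a - b = e" unfolding a_def b_def by (simp_all add: field_simps)
  have abl: "a * b = lam^2"
  proof -
    have "4*(a*b) = (a+b)^2 - (a-b)^2" by algebra
    then show ?thesis unfolding ab using SS by simp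
  qed
  have a2b2: "a^2 + b^2 = 2*lam^2 + e^2"
  proof -
    have "2*(a^2 + b^2) = (a+b)^2 + (a-b)^2" by algebra
    then show ?thesis unfolding ab using SS by simp
  qed
  define s :: "real^3" where "s = vector [a, b, lam + e]"
  have s: "is_sing_vals (witness lam e) s"
    unfolding is_sing_vals_iff
  proof (intro conjI allI)
    fix i show "0 \<le> s$i" using exhaust_3[of i] Se e lam unfolding s_def a_def b_def by auto
  next
    fix x
    show "x^3 - norm (witness lam e)^2 * x^2 + norm (cof (witness lam e))^2 * x - det (witness lam e)^2
       = (x - (s$1)^2) * (x - (s$2)^2) * (x - (s$3)^2)"
      unfolding norm_mat3_sq det_3 cof_mat3 witness_entries s_def using abl a2b2 by simp algebra
  qed
  show ?thesis
    unfolding Gfun_eq_esym[OF s] trace_mat3 cof_mat3 witness_entries esym1_def esym2_def s_def S_def[symmetric]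
    using abl by (simp add: ab(1)[symmetric] algebra_simps power2_eq_square)
qed

lemma Gfun_witness_pos:
  assumes lam: "0 < lam" and e: "0 < e"
  shows "0 < Gfun lam (witness lam e)"
proof -
  have "sqrt (4*lam^2) < sqrt (4*lam^2 + e^2)" using e by simp
  moreover have "sqrt (4*lam^2) = 2*lam" using lam by (simp add: real_sqrt_mult)
  ultimately show ?thesis using lam e by (simp add: Gfun_witness)
qed

definition dev :: "real \<Rightarrow> mat3 \<Rightarrow> real" where
  "dev lam A = norm (A - lam *\<^sub>R mat 1)"

definition G_ratio :: "nat \<Rightarrow> real \<Rightarrow> mat3 \<Rightarrow> real" where
  "G_ratio k lam A = \<bar>Gfun lam A\<bar> / dev lam A ^ k"

lemma M2_eq: "M2 lam c = (SUP A\<in>{A. c \<le> dev lam A}. G_ratio 2 lam A)"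
  by (simp add: M2_def G_ratio_def dev_def)

lemma M3_eq: "M3 lam c = (SUP A\<in>{A. 0 < dev lam A \<and> dev lam A < c}. G_ratio 3 lam A)"
  by (simp add: M3_def G_ratio_def dev_def)

lemma dev_witness: "0 \<le> e \<Longrightarrow> dev lam (witness lam e) = sqrt 2 * e"
  by (simp add: dev_def norm_witness_dev)

lemma dev_rescale:
  "0 \<le> a \<Longrightarrow> dev lam (lam *\<^sub>R mat 1 + a *\<^sub>R (A - lam *\<^sub>R mat 1)) = a * dev lam A"
  by (simp add: dev_def)

lemma dist_rescale: "dist (lam *\<^sub>R mat 1 + a *\<^sub>R (A - lam *\<^sub>R mat 1)) A = \<bar>a - 1\<bar> * dev lam A"
proof -
  have "lam *\<^sub>R mat 1 + a *\<^sub>R (A - lam *\<^sub>R mat 1) - A = (a - 1) *\<^sub>R (A - lam *\<^sub>R mat 1)"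
    by (simp add: algebra_simps)
  then show ?thesis by (simp add: dist_norm dev_def)
qed

definition shell :: "real \<Rightarrow> real \<Rightarrow> real \<Rightarrow> mat3 set" where
  "shell lam r R = {A. r \<le> dev lam A \<and> dev lam A \<le> R}"

lemma compact_shell: "compact (shell lam r R)"
proof -
  have "shell lam r R = cball (lam *\<^sub>R mat 1) R - ball (lam *\<^sub>R mat 1) r"
    by (auto simp: shell_def dev_def dist_norm norm_minus_commute)
  then show ?thesis by (simp add: compact_diff)
qed

lemma uniformly_continuous_on_G_ratio:
  assumes "0 < r"
  shows "uniformly_continuous_on (shell lam r R) (G_ratio k lam)"
proof (rule compact_uniformly_continuous[OF _ compact_shell])
  have "continuous_on (shell lam r R) (Gfun lam)"
    using continuous_on_Gfun by (rule continuous_on_subset) simp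
  then show "continuous_on (shell lam r R) (G_ratio k lam)"
    unfolding G_ratio_def[abs_def] dev_def using assms
    by (intro continuous_intros) (auto simp: shell_def dev_def)
qed

lemma sqrt2_bounds: "1 < sqrt (2::real)" "sqrt (2::real) < 2"
  using real_sqrt_less_mono[of 2 4] by simp_all

lemma dev_witness_ge: "0 \<le> c \<Longrightarrow> c \<le> dev lam (witness lam c)"
  using mult_right_mono[of 1 "sqrt 2" c] sqrt2_bounds by (simp add: dev_witness)

lemma dev_witness_half: "0 < c \<Longrightarrow> 0 < dev lam (witness lam (c/2)) \<and> dev lam (witness lam (c/2)) < c"
  using sqrt2_bounds by (simp add: dev_witness)

context
  fixes lam :: real
  assumes lam: "0 < lam"
begin

lemma bdd_above_M2_set:
  assumes c: "0 < c"
  shows "bdd_above (G_ratio 2 lam ` {A. c \<le> dev lam A})"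
proof (rule bdd_aboveI2)
  fix A assume "A \<in> {A. c \<le> dev lam A}"
  then have hc: "c \<le> dev lam A" by simp
  define h U u where "h = dev lam A" and "U = 2*lam/c" and "u = 2*lam/h"
  have h: "0 < h" using hc c by (simp add: h_def)
  have u: "0 \<le> u" "u \<le> U" using lam c hc by (simp_all add: u_def U_def h_def frac_le)
  have "G_ratio 2 lam A \<le> (4 * (h + 2*lam)^2 + 4 * lam * (h + 2*lam)) / h^2"
    unfolding G_ratio_def h_def[symmetric]
    using abs_Gfun_le_quadratic[of lam A] lam by (intro divide_right_mono) (simp_all add: h_def dev_def)
  also have "\<dots> = 4 * (1 + u)^2 + 2 * u * (1 + u)"
    using h by (simp add: u_def field_simps power2_eq_square)
  also have "\<dots> \<le> 4 * (1 + U)^2 + 2 * U * (1 + U)"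
    using u by (intro add_mono mult_left_mono mult_mono power_mono) auto
  finally show "G_ratio 2 lam A \<le> 4 * (1 + U)^2 + 2 * U * (1 + U)" .
qed

lemma bdd_above_M3_set:
  assumes c: "0 < c"
  shows "bdd_above (G_ratio 3 lam ` {A. 0 < dev lam A \<and> dev lam A < c})"
proof (rule bdd_aboveI2)
  define d Q where "d = lam/1000" and "Q h = 4 * (h + 2*lam)^2 + 4 * lam * (h + 2*lam)" for h
  have d: "0 < d" using lam by (simp add: d_def)
  fix A assume "A \<in> {A. 0 < dev lam A \<and> dev lam A < c}"
  then have h: "0 < dev lam A" "dev lam A < c" by simp_all
  have Q: "0 \<le> Q c / d^3" using lam c d by (simp add: Q_def)
  have Q_mono: "Q h \<le> Q c" if "0 \<le> h" "h \<le> c" for h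
    unfolding Q_def using that lam by (intro add_mono mult_left_mono power_mono) auto
  show "G_ratio 3 lam A \<le> 7/lam + Q c / d^3"
  proof (cases "dev lam A \<le> d")
    case True
    have "G_ratio 3 lam A \<le> (7 * dev lam A^3 / lam) / dev lam A^3"
      unfolding G_ratio_def
      using Gfun_cubic_bound[OF lam, of A] True h by (intro divide_right_mono) (simp_all add: dev_def d_def)
    also have "\<dots> = 7/lam" using h by simp
    finally show ?thesis using Q by simp
  next
    case False
    have "\<bar>Gfun lam A\<bar> \<le> Q (dev lam A)"
      using abs_Gfun_le_quadratic[of lam A] lam by (simp add: Q_def dev_def)
    then have "G_ratio 3 lam A \<le> Q c / dev lam A^3"
      unfolding G_ratio_def using Q_mono[of "dev lam A"] h by (intro divide_right_mono) auto
    also have "\<dots> \<le> Q c / d^3"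
      using False d Q h lam c by (intro divide_left_mono power_mono) (auto simp: Q_def)
    moreover have "0 \<le> 7/lam" using lam by simp
    ultimately show ?thesis by linarith
  qed
qed

lemma M2_upper: "0 < c \<Longrightarrow> c \<le> dev lam A \<Longrightarrow> G_ratio 2 lam A \<le> M2 lam c"
  unfolding M2_eq by (rule cSUP_upper) (use bdd_above_M2_set in auto)

lemma M3_upper: "0 < dev lam A \<Longrightarrow> dev lam A < c \<Longrightarrow> G_ratio 3 lam A \<le> M3 lam c"
  unfolding M3_eq by (rule cSUP_upper) (use bdd_above_M3_set in auto)

lemma M2_antimono: "0 < c \<Longrightarrow> c \<le> c' \<Longrightarrow> M2 lam c' \<le> M2 lam c"
  unfolding M2_eq
proof (rule cSUP_subset_mono)
  assume c: "0 < c" "c \<le> c'"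
  show "{A. c' \<le> dev lam A} \<noteq> {}"
    using dev_witness_ge[of c' lam] c by auto
  show "bdd_above (G_ratio 2 lam ` {A. c \<le> dev lam A})" using bdd_above_M2_set c by simp
  show "{A. c' \<le> dev lam A} \<subseteq> {A. c \<le> dev lam A}" using c by auto
qed simp

lemma M3_mono: "0 < c \<Longrightarrow> c \<le> c' \<Longrightarrow> M3 lam c \<le> M3 lam c'"
  unfolding M3_eq
proof (rule cSUP_subset_mono)
  assume c: "0 < c" "c \<le> c'"
  show "{A. 0 < dev lam A \<and> dev lam A < c} \<noteq> {}"
    using dev_witness_half[of c lam] c by auto
  show "bdd_above (G_ratio 3 lam ` {A. 0 < dev lam A \<and> dev lam A < c'})" using bdd_above_M3_set c by simp
  show "{A. 0 < dev lam A \<and> dev lam A < c} \<subseteq> {A. 0 < dev lam A \<and> dev lam A < c'}" using c by auto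
qed simp

lemma M2_pos: "0 < c \<Longrightarrow> 0 < M2 lam c"
proof -
  assume c: "0 < c"
  have dev: "c \<le> dev lam (witness lam c)" using c by (simp add: dev_witness_ge)
  have "0 < G_ratio 2 lam (witness lam c)"
    unfolding G_ratio_def using Gfun_witness_pos[OF lam c] c dev by simp
  also have "\<dots> \<le> M2 lam c" using c dev by (rule M2_upper)
  finally show ?thesis .
qed

lemma M3_pos: "0 < c \<Longrightarrow> 0 < M3 lam c"
proof -
  assume c: "0 < c"
  have dev: "0 < dev lam (witness lam (c/2))" "dev lam (witness lam (c/2)) < c"
    using dev_witness_half[OF c] by simp_all
  have "0 < G_ratio 3 lam (witness lam (c/2))"
    unfolding G_ratio_def using Gfun_witness_pos[OF lam, of "c/2"] c dev by simp
  also have "\<dots> \<le> M3 lam c" using dev by (rule M3_upper)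
  finally show ?thesis .
qed

text \<open>Raising the threshold from \<open>c\<close> to \<open>c'\<close> loses only matrices with \<open>c \<le> dev < c'\<close>; pushing them
  radially out to distance \<open>c'\<close> changes \<open>G_ratio\<close> little by uniform continuity on a shell.\<close>
lemma M2_le_add:
  assumes a: "0 < a" and e: "0 < e"
  obtains d where "0 < d"
    "\<And>c c'. a \<le> c \<Longrightarrow> c \<le> c' \<Longrightarrow> c' \<le> b \<Longrightarrow> c' - c < d \<Longrightarrow> M2 lam c \<le> M2 lam c' + e"
proof -
  obtain d where d: "0 < d"
    and close: "\<And>A A'. A \<in> shell lam a b \<Longrightarrow> A' \<in> shell lam a b \<Longrightarrow> dist A' A < d \<Longrightarrow>
                   \<bar>G_ratio 2 lam A' - G_ratio 2 lam A\<bar> < e"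
    using uniformly_continuous_on_G_ratio[OF a, of lam b 2] e
    unfolding uniformly_continuous_on_def dist_real_def by metis
  have "M2 lam c \<le> M2 lam c' + e" if cc: "a \<le> c" "c \<le> c'" "c' \<le> b" "c' - c < d" for c c'
    unfolding M2_eq[of lam c]
  proof (rule cSUP_least)
    show "{A. c \<le> dev lam A} \<noteq> {}"
      using dev_witness_ge[of c lam] cc a by auto
  next
    fix A assume "A \<in> {A. c \<le> dev lam A}"
    then have rc: "c \<le> dev lam A" by simp
    show "G_ratio 2 lam A \<le> M2 lam c' + e"
    proof (cases "c' \<le> dev lam A")
      case True
      then show ?thesis using M2_upper[of c' A] cc a e by simp
    next
      case False
      define A' where "A' = lam *\<^sub>R mat 1 + (c' / dev lam A) *\<^sub>R (A - lam *\<^sub>R mat 1)"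
      have pos: "0 < dev lam A" using rc cc a by simp
      have dA': "dev lam A' = c'" unfolding A'_def using dev_rescale[of "c' / dev lam A" lam A] pos cc a by simp
      have "dist A' A = c' - dev lam A"
        unfolding A'_def dist_rescale using pos False by (simp add: abs_if field_simps)
      then have "\<bar>G_ratio 2 lam A' - G_ratio 2 lam A\<bar> < e"
        using rc False cc dA' by (intro close) (auto simp: shell_def)
      moreover have "G_ratio 2 lam A' \<le> M2 lam c'" using M2_upper[of c' A'] dA' cc a by simp
      ultimately show ?thesis by linarith
    qed
  qed
  with d that show ?thesis by blast
qed

lemma M3_le_add:
  assumes a: "0 < a" and ab: "a \<le> b" and e: "0 < e"
  obtains d where "0 < d"
    "\<And>c c'. a \<le> c \<Longrightarrow> c \<le> c' \<Longrightarrow> c' \<le> b \<Longrightarrow> c' - c < d \<Longrightarrow> M3 lam c' \<le> M3 lam c + e"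
proof -
  have r: "0 < a^2/b" using a ab by simp
  obtain d where d: "0 < d"
    and close: "\<And>A A'. A \<in> shell lam (a^2/b) b \<Longrightarrow> A' \<in> shell lam (a^2/b) b \<Longrightarrow> dist A' A < d \<Longrightarrow>
                   \<bar>G_ratio 3 lam A' - G_ratio 3 lam A\<bar> < e"
    using uniformly_continuous_on_G_ratio[OF r, of lam b 3] e
    unfolding uniformly_continuous_on_def dist_real_def by metis
  have "M3 lam c' \<le> M3 lam c + e" if cc: "a \<le> c" "c \<le> c'" "c' \<le> b" "c' - c < d" for c c'
    unfolding M3_eq[of lam c']
  proof (rule cSUP_least)
    show "{A. 0 < dev lam A \<and> dev lam A < c'} \<noteq> {}"
      using dev_witness_half[of c' lam] cc a by auto
  next
    fix A assume "A \<in> {A. 0 < dev lam A \<and> dev lam A < c'}"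
    then have rc: "0 < dev lam A" "dev lam A < c'" by simp_all
    show "G_ratio 3 lam A \<le> M3 lam c + e"
    proof (cases "dev lam A < c")
      case True
      then show ?thesis using M3_upper[of A c] rc e by simp
    next
      case False
      define A' where "A' = lam *\<^sub>R mat 1 + (c/c') *\<^sub>R (A - lam *\<^sub>R mat 1)"
      have c: "0 < c" "0 < c'" using cc a by simp_all
      have dA': "dev lam A' = (c/c') * dev lam A" unfolding A'_def using dev_rescale c by simp
      have "dist A' A = (c' - c) * (dev lam A / c')"
        unfolding A'_def dist_rescale using cc c by (simp add: abs_if field_simps)
      also have "\<dots> \<le> (c' - c) * 1" using rc cc c by (intro mult_left_mono) (auto simp: divide_le_eq_1)
      finally have close_A: "dist A' A < d" using cc by simp
      have "a^2/b \<le> (c*c)/c'"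
        using a cc c by (intro frac_le) (auto simp: power2_eq_square intro: mult_mono)
      also have "\<dots> = (c/c') * c" by simp
      also have "\<dots> \<le> dev lam A'" unfolding dA' using False c by (intro mult_left_mono) auto
      finally have lo: "a^2/b \<le> dev lam A'" .
      have hi: "dev lam A' < c" unfolding dA' using rc c by (simp add: field_simps)
      have "\<bar>G_ratio 3 lam A' - G_ratio 3 lam A\<bar> < e"
        using close_A lo hi rc cc False a ab by (intro close) (auto simp: shell_def)
      moreover have "G_ratio 3 lam A' \<le> M3 lam c"
        using M3_upper[of A' c] lo hi r by simp
      ultimately show ?thesis by linarith
    qed
  qed
  with d that show ?thesis by blast
qed

lemma isCont_M2: "0 < c \<Longrightarrow> isCont (M2 lam) c"
proof (rule isCont_if_uniformly_continuous_around, assumption, rule uniformly_continuous_on_intervalI)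
  fix e :: real assume c: "0 < c" and e: "0 < e"
  obtain d where d: "0 < d"
    and near: "\<And>x y. c/2 \<le> x \<Longrightarrow> x \<le> y \<Longrightarrow> y \<le> 2*c \<Longrightarrow> y - x < d \<Longrightarrow> M2 lam x \<le> M2 lam y + e/2"
    using M2_le_add[of "c/2" "e/2" "2*c"] c e by auto
  have "\<bar>M2 lam y - M2 lam x\<bar> < e" if "c/2 \<le> x" "x \<le> y" "y \<le> 2*c" "y - x < d" for x y
    using near[OF that] M2_antimono[of x y] that c e unfolding abs_less_iff by linarith
  with d show "\<exists>d>0. \<forall>x y. c/2 \<le> x \<longrightarrow> x \<le> y \<longrightarrow> y \<le> 2*c \<longrightarrow> y - x < d \<longrightarrow> \<bar>M2 lam y - M2 lam x\<bar> < e"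
    by blast
qed

lemma isCont_M3: "0 < c \<Longrightarrow> isCont (M3 lam) c"
proof (rule isCont_if_uniformly_continuous_around, assumption, rule uniformly_continuous_on_intervalI)
  fix e :: real assume c: "0 < c" and e: "0 < e"
  obtain d where d: "0 < d"
    and near: "\<And>x y. c/2 \<le> x \<Longrightarrow> x \<le> y \<Longrightarrow> y \<le> 2*c \<Longrightarrow> y - x < d \<Longrightarrow> M3 lam y \<le> M3 lam x + e/2"
    using M3_le_add[of "c/2" "2*c" "e/2"] c e by auto
  have "\<bar>M3 lam y - M3 lam x\<bar> < e" if "c/2 \<le> x" "x \<le> y" "y \<le> 2*c" "y - x < d" for x y
    using near[OF that] M3_mono[of x y] that c e unfolding abs_less_iff by linarith
  with d show "\<exists>d>0. \<forall>x y. c/2 \<le> x \<longrightarrow> x \<le> y \<longrightarrow> y \<le> 2*c \<longrightarrow> y - x < d \<longrightarrow> \<bar>M3 lam y - M3 lam x\<bar> < e"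
    by blast
qed

lemma unique_fixed_point_M2_div_M3: "\<exists>!c. 0 < c \<and> M2 lam c / M3 lam c = c"
proof (rule unique_fixed_point_antimono)
  fix c :: real assume c: "0 < c"
  show "isCont (\<lambda>c. M2 lam c / M3 lam c) c"
    using c M3_pos[OF c] by (intro continuous_intros isCont_M2 isCont_M3) auto
  show "0 < M2 lam c / M3 lam c" using M2_pos[OF c] M3_pos[OF c] by simp
  fix c' assume "c \<le> c'"
  then show "M2 lam c' / M3 lam c' \<le> M2 lam c / M3 lam c"
    using c M2_antimono[OF c] M3_mono[OF c] M2_pos M3_pos[OF c]
    by (intro frac_le) (auto intro: less_imp_le)
qed

end

theorem lemma3p3:
  fixes lam q :: real
  assumes "lam > 0" and "2 < q" and "q < 3"
  defines "f1 \<equiv> (\<lambda>c0. c0 powr (q - 2) / M2 lam c0)"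
      and "f2 \<equiv> (\<lambda>c0. c0 powr (q - 3) / M3 lam c0)"
  shows "mono_on {0<..} f1 \<and>
         antimono_on {0<..} f2 \<and>
         (\<exists>!c. c > 0 \<and> M2 lam c / M3 lam c = c) \<and>
         (\<forall>c. c > 0 \<and> M2 lam c / M3 lam c = c \<longrightarrow>
           (INF c0\<in>{0<..}. max (f1 c0) (f2 c0)) = M2 lam c powr (q - 3) * M3 lam c powr (2 - q))"
proof -
  note lam = \<open>lam > 0\<close>
  have mono: "mono_on {0<..} f1"
    unfolding f1_def using assms M2_pos[OF lam] M2_antimono[OF lam] by (intro mono_on_powr_div) auto
  have antimono: "antimono_on {0<..} f2"
    unfolding f2_def using assms M3_pos[OF lam] M3_mono[OF lam] by (intro antimono_on_powr_div) auto
  have "(INF c0\<in>{0<..}. max (f1 c0) (f2 c0)) = M2 lam c powr (q - 3) * M3 lam c powr (2 - q)"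
    if c: "0 < c" "M2 lam c / M3 lam c = c" for c
  proof -
    have "f1 c = M2 lam c powr (q - 3) * M3 lam c powr (2 - q)"
         "f2 c = M2 lam c powr (q - 3) * M3 lam c powr (2 - q)"
      using powr_ratio_identities[OF M2_pos[OF lam c(1)] M3_pos[OF lam c(1)], of q] c(2)
      by (simp_all add: f1_def f2_def)
    then show ?thesis using INF_max_mono_antimono[OF mono antimono, of c] c by simp
  qed
  then show ?thesis using mono antimono unique_fixed_point_M2_div_M3[OF lam] by blast
qed

end
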